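(* Consider a sealed-bid first-price common-value auction with limit price $L\ge 0$ for a single good whose common value $v$ has CDF $F_v$, density $f_v$, support $\mathbb{R}_+$ and finite mean, with $\mathbb{E}[v]>L$ and with $\underline v$ in the support of $F_v$ satisfying $L=\mathbb{E}[\tilde v\mid\tilde v<\underline v]$ ($\tilde v\sim F_v$). There are $n\ge 2$ bidders: $n-1$ of them bid in period 1, knowing only $F_v$; then $v$ is realized and the remaining (period-2) bidder observes $v$ (but no other bids) and bids. The highest bid wins, the winner pays their bid and gets $v$ minus the bid; if the highest bid is strictly below $L$ the good is unsold. The period-2 bidder wins any tie with a period-1 bidder and can win with a bid equal to $L$; a winning bid from a period-1 bidder that equals exactly $L$ results in no sale. Let $$\beta_L(v)=\begin{cases}\mathbb{E}[\tilde v\mid \tilde v<v] & v\ge \underline v,\\ L & L<v<\underline v,\\ 0 & v\le L.\end{cases}$$ Then any profile in which the period-2 bidder bids $\beta_L(v)$ and the $n-1$ period-1 bidders use (mixed) strategies such that the maximum of their bids has the same distribution as $\beta_L(v')$ with $v'\sim F_v$, is an equilibrium.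
   Context: Bidders are risk neutral; equilibrium means perfect Bayesian Nash equilibrium. *)

theory Defs
  imports "HOL-Probability.Probability"
begin

definition vdist :: "(real \<Rightarrow> real) \<Rightarrow> real measure" where
  "vdist f = density lborel (\<lambda>x. ennreal (f x))"

definition measure_support :: "real measure \<Rightarrow> real set" where
  "measure_support M = {x. \<forall>e>0. emeasure M (ball x e) > 0}"

text \<open>E[v | v < w]; uses the HOL convention x/0 = 0 when P(v<w) = 0.\<close>
definition cond_exp_below :: "real measure \<Rightarrow> real \<Rightarrow> real" where
  "cond_exp_below M w = set_lebesgue_integral M {..<w} (\<lambda>t. t) / measure M {..<w}"

definition beta_L :: "real measure \<Rightarrow> real \<Rightarrow> real \<Rightarrow> real \<Rightarrow> real" where
  "beta_L M L vlow v =
     (if vlow \<le> v then cond_exp_below M v else if L < v then L else 0)"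

definition bid_strategy :: "real measure \<Rightarrow> bool" where
  "bid_strategy \<tau> \<longleftrightarrow> prob_space \<tau> \<and> sets \<tau> = sets borel \<and> emeasure \<tau> {0..} = 1"

text \<open>The period-2 bidder wins ties with period-1 bidders; a period-1 winning bid equal to L
  (or below L) means no sale; ties among period-1 bidders are broken uniformly at random.\<close>
definition p1_payoff :: "nat set \<Rightarrow> real \<Rightarrow> (real \<Rightarrow> real) \<Rightarrow> nat \<Rightarrow> (nat \<Rightarrow> real) \<Rightarrow> real \<Rightarrow> real" where
  "p1_payoff I L b2 i b v =
     (if L < b i \<and> b2 v < b i \<and> (\<forall>j\<in>I. b j \<le> b i)
      then (v - b i) / real (card {j\<in>I. b j = b i}) else 0)"

definition p2_payoff :: "nat set \<Rightarrow> real \<Rightarrow> real \<Rightarrow> (nat \<Rightarrow> real) \<Rightarrow> real \<Rightarrow> real" where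
  "p2_payoff I L x b v = (if L \<le> x \<and> (\<forall>j\<in>I. b j \<le> x) then v - x else 0)"

text \<open>The period-2 bidder observes only v, so her belief about period-1 bids is the prior;
  sequential rationality is required at every value v in the support.
  Period-1 deviations to any mixed strategy are considered; a deviation whose expected
  payoff is not integrable has expected payoff -infinity (payoffs are bounded above by
  an integrable function) and hence is never profitable.\<close>
definition is_equilibrium ::
  "real measure \<Rightarrow> real \<Rightarrow> nat \<Rightarrow> (nat \<Rightarrow> real measure) \<Rightarrow> (real \<Rightarrow> real) \<Rightarrow> bool" where
  "is_equilibrium M L n \<sigma> b2 \<longleftrightarrow>
     (let I = {0..<n-1} in
       (\<forall>i\<in>I. bid_strategy (\<sigma> i)) \<and>
       b2 \<in> borel_measurable borel \<and> (\<forall>v. 0 \<le> b2 v) \<and>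
       (\<forall>v\<in>measure_support M. \<forall>x\<ge>0.
          integral\<^sup>L (PiM I \<sigma>) (\<lambda>b. p2_payoff I L x b v)
            \<le> integral\<^sup>L (PiM I \<sigma>) (\<lambda>b. p2_payoff I L (b2 v) b v)) \<and>
       (\<forall>i\<in>I.
          integrable (PiM I \<sigma> \<Otimes>\<^sub>M M) (\<lambda>(b, v). p1_payoff I L b2 i b v) \<and>
          (\<forall>\<tau>. bid_strategy \<tau> \<longrightarrow>
             integrable (PiM I (\<sigma>(i := \<tau>)) \<Otimes>\<^sub>M M) (\<lambda>(b, v). p1_payoff I L b2 i b v) \<longrightarrow>
             integral\<^sup>L (PiM I (\<sigma>(i := \<tau>)) \<Otimes>\<^sub>M M) (\<lambda>(b, v). p1_payoff I L b2 i b v)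
               \<le> integral\<^sup>L (PiM I \<sigma> \<Otimes>\<^sub>M M) (\<lambda>(b, v). p1_payoff I L b2 i b v))))"

end

theory Submission
  imports Defs
begin

text \<open>
  Write F w = P(v < w) and e w = E[v | v < w]. As F has no atoms and charges every interval
  of [0, \<infinity>), e is continuous and strictly increasing there with e w \<le> w, and beta_L agrees
  with e from vlow on, where it starts at e vlow = L. Both kinds of bidders compare surpluses
  E[(v - v') 1{v' \<in> S}] of a value v against an independent copy v'.
  Since the highest period-1 bid is distributed as beta_L v', a period-2 bid x = e w \<ge> L wins
  iff v' \<le> w and then earns (v - x) F w = E[(v - v') 1{v' < w}], which is maximal at the
  cut-off w = v, i.e. at x = beta_L v; bids above the range of beta_L earn v - x \<le> v - E v'.
  A period-1 bid c = e w > L wins only when v < w, an event on which v has mean exactly c, so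
  it earns nothing; bids above the range of beta_L earn at most E v - c \<le> 0. So no period-1
  deviation is profitable, and the equilibrium bids, almost surely in the range of beta_L,
  earn exactly zero.
\<close>

section \<open>The value distribution\<close>

lemma null_sets_disjoint_measure_support:
  fixes M :: "real measure"
  assumes sets_M: "sets M = sets borel" and A: "A \<in> sets borel"
    and disjoint: "A \<inter> measure_support M = {}"
  shows "A \<in> null_sets M"
proof -
  define B where "B = {ball x e | x e. 0 < e \<and> emeasure M (ball x e) = 0}"
  obtain B' where B': "B' \<subseteq> B" "countable B'" "\<Union>B' = \<Union>B"
    using Lindelof[of B] by (auto simp: B_def)
  have "(\<Union>S\<in>B'. S) \<in> null_sets M"
  proof (rule null_sets_UN'[OF B'(2)])
    fix S assume "S \<in> B'"
    then obtain x e where "S = ball x e" "emeasure M (ball x e) = 0"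
      using B'(1) by (auto simp: B_def)
    then show "S \<in> null_sets M" using sets_M by (simp add: null_sets_def)
  qed
  moreover have "A \<subseteq> \<Union>B"
  proof
    fix x assume "x \<in> A"
    then have "x \<notin> measure_support M" using disjoint by blast
    then obtain e where "0 < e" "emeasure M (ball x e) = 0"
      unfolding measure_support_def by (auto simp: not_less)
    then have "ball x e \<in> B" unfolding B_def by blast
    moreover have "x \<in> ball x e" using \<open>0 < e\<close> by simp
    ultimately show "x \<in> \<Union>B" by blast
  qed
  ultimately show ?thesis
    using null_sets_subset[of "\<Union>B" M A] B'(3) A sets_M by simp
qed

locale value_distribution = real_distribution M for M :: "real measure" +
  assumes measure_singleton: "\<And>x. measure M {x} = 0"
    and measure_support_M: "measure_support M = {0..}"
    and integrable_value: "integrable M (\<lambda>x. x)"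
begin

lemma lessThan_0_in_null_sets: "{..<0} \<in> null_sets M"
  using measure_support_M by (intro null_sets_disjoint_measure_support) auto

lemma AE_nonneg: "AE s in M. 0 \<le> s"
  using lessThan_0_in_null_sets by (rule AE_I') auto

lemma measure_atLeastLessThan_pos:
  assumes "0 \<le> a" "a < b"
  shows "0 < measure M {a..<b}"
proof -
  define m where "m = (a + b) / 2"
  have "m \<in> measure_support M" using assms measure_support_M by (simp add: m_def)
  then have "0 < emeasure M (ball m ((b - a) / 2))"
    using assms unfolding measure_support_def by simp
  moreover have "ball m ((b - a) / 2) = {a<..<b}"
    by (simp add: ball_eq_greaterThanLessThan m_def field_simps)
  ultimately have "0 < measure M {a<..<b}" by (simp add: emeasure_eq_measure)
  also have "\<dots> \<le> measure M {a..<b}" by (intro finite_measure_mono) auto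
  finally show ?thesis .
qed

definition F :: "real \<Rightarrow> real" where "F w = measure M {..<w}"

definition partial_mean :: "real \<Rightarrow> real" where
  "partial_mean w = (\<integral>s. indicator {..<w} s * s \<partial>M)"

lemma F_eq_atMost: "F w = measure M {..w}"
proof -
  have "{..w} = {..<w} \<union> {w}" by auto
  then have "measure M {..w} = measure M {..<w} + measure M {w}"
    using finite_measure_Union[of "{..<w}" "{w}"] by simp
  then show ?thesis by (simp add: F_def measure_singleton)
qed

lemma cdf_eq_F: "cdf M = F"
  by (simp add: fun_eq_iff cdf_def F_eq_atMost)

lemma measure_atLeastLessThan:
  assumes "a \<le> b"
  shows "measure M {a..<b} = F b - F a"
proof -
  have "{a..<b} = {..<b} - {..<a}" using assms by auto
  moreover have "measure M ({..<b} - {..<a}) = measure M {..<b} - measure M {..<a}"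
    using assms by (intro finite_measure_Diff) auto
  ultimately show ?thesis by (simp add: F_def)
qed

lemma F_mono: "a \<le> b \<Longrightarrow> F a \<le> F b"
  unfolding F_def by (intro finite_measure_mono) auto

lemma F_nonpos_eq_0:
  assumes "w \<le> 0"
  shows "F w = 0"
proof -
  have "F 0 = 0" using null_setsD1[OF lessThan_0_in_null_sets] by (simp add: F_def measure_def)
  then show "F w = 0" using F_mono[OF assms] F_def by (simp add: order_antisym)
qed

lemma F_pos: "0 < w \<Longrightarrow> 0 < F w"
  using measure_atLeastLessThan_pos[of 0 w] measure_atLeastLessThan[of 0 w] F_nonpos_eq_0[of 0]
  by simp

lemma isCont_F: "isCont F w"
  using isCont_cdf[of w] measure_singleton by (simp add: cdf_eq_F)

lemma F_tendsto_1: "(F \<longlongrightarrow> 1) at_top"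
  using cdf_lim_at_top_prob by (simp add: cdf_eq_F)

lemma integrable_indicator_mult_id: "S \<in> sets borel \<Longrightarrow> integrable M (\<lambda>s. indicator S s * s)"
  using integrable_real_mult_indicator[of S M "\<lambda>x. x"] integrable_value by (simp add: mult.commute)

lemma integrable_indicator_mult_const:
  "S \<in> sets borel \<Longrightarrow> integrable M (\<lambda>s. indicator S s * (c::real))"
  using integrable_real_mult_indicator[of S M "\<lambda>_. c"] by (simp add: mult.commute)

lemma integral_indicator_mult_const:
  "S \<in> sets borel \<Longrightarrow> (\<integral>s. indicator S s * (c::real) \<partial>M) = c * measure M S"
  by (simp add: mult.commute)

lemma partial_mean_diff:
  assumes "a \<le> b"
  shows "partial_mean b - partial_mean a = (\<integral>s. indicator {a..<b} s * s \<partial>M)"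
proof -
  have "partial_mean b - partial_mean a
      = (\<integral>s. indicator {..<b} s * s - indicator {..<a} s * s \<partial>M)"
    unfolding partial_mean_def
    by (simp add: Bochner_Integration.integral_diff[OF integrable_indicator_mult_id integrable_indicator_mult_id])
  also have "\<dots> = (\<integral>s. indicator {a..<b} s * s \<partial>M)"
    using assms by (intro Bochner_Integration.integral_cong) (auto simp: indicator_def)
  finally show ?thesis .
qed

lemma partial_mean_diff_bounds:
  assumes "a \<le> b"
  shows "a * (F b - F a) \<le> partial_mean b - partial_mean a"
    and "partial_mean b - partial_mean a \<le> b * (F b - F a)"
proof -
  have "a * (F b - F a) = (\<integral>s. indicator {a..<b} s * a \<partial>M)"
    using measure_atLeastLessThan[OF assms] by (simp add: integral_indicator_mult_const)
  also have "\<dots> \<le> (\<integral>s. indicator {a..<b} s * s \<partial>M)"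
    by (intro integral_mono integrable_indicator_mult_id integrable_indicator_mult_const)
      (auto simp: indicator_def)
  finally show "a * (F b - F a) \<le> partial_mean b - partial_mean a"
    using partial_mean_diff[OF assms] by simp
  have "(\<integral>s. indicator {a..<b} s * s \<partial>M) \<le> (\<integral>s. indicator {a..<b} s * b \<partial>M)"
    by (intro integral_mono integrable_indicator_mult_id integrable_indicator_mult_const)
      (auto simp: indicator_def)
  also have "\<dots> = b * (F b - F a)"
    using measure_atLeastLessThan[OF assms] by (simp add: integral_indicator_mult_const)
  finally show "partial_mean b - partial_mean a \<le> b * (F b - F a)"
    using partial_mean_diff[OF assms] by simp
qed

lemma partial_mean_diff_gt:
  assumes "0 \<le> a" "a < b"
  shows "a * (F b - F a) < partial_mean b - partial_mean a"
proof -
  define m where "m = (a + b) / 2"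
  have m: "a < m" "m < b" using assms by (auto simp: m_def)
  have "a * (F b - F a) < a * (F b - F a) + (m - a) * measure M {m..<b}"
    using measure_atLeastLessThan_pos[of m b] m assms by simp
  also have "\<dots> = (\<integral>s. indicator {a..<b} s * a + indicator {m..<b} s * (m - a) \<partial>M)"
    using measure_atLeastLessThan[of a b] assms
    by (simp add: Bochner_Integration.integral_add[OF integrable_indicator_mult_const
          integrable_indicator_mult_const] integral_indicator_mult_const)
  also have "\<dots> \<le> (\<integral>s. indicator {a..<b} s * s \<partial>M)"
    using m
    by (intro integral_mono integrable_indicator_mult_id Bochner_Integration.integrable_add
          integrable_indicator_mult_const) (auto simp: indicator_def)
  finally show ?thesis using partial_mean_diff[of a b] assms by simp
qed

lemma partial_mean_nonneg: "0 \<le> partial_mean w"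
  unfolding partial_mean_def using AE_nonneg by (intro integral_nonneg_AE) (auto elim: AE_mp)

lemma partial_mean_le: "partial_mean w \<le> w * F w"
proof -
  have "partial_mean w \<le> (\<integral>s. indicator {..<w} s * w \<partial>M)"
    unfolding partial_mean_def
    by (intro integral_mono integrable_indicator_mult_id integrable_indicator_mult_const)
      (auto simp: indicator_def)
  then show ?thesis by (simp add: integral_indicator_mult_const F_def mult.commute)
qed

lemma partial_mean_nonpos_eq_0: "w \<le> 0 \<Longrightarrow> partial_mean w = 0"
  using partial_mean_le[of w] partial_mean_nonneg[of w] F_nonpos_eq_0[of w] by simp

lemma abs_partial_mean_diff_le:
  "\<bar>partial_mean t - partial_mean w\<bar> \<le> (\<bar>t\<bar> + \<bar>w\<bar>) * \<bar>F t - F w\<bar>"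
proof -
  have *: "\<bar>partial_mean b - partial_mean a\<bar> \<le> (\<bar>b\<bar> + \<bar>a\<bar>) * \<bar>F b - F a\<bar>"
    if "a \<le> b" for a b
  proof -
    define D where "D = F b - F a"
    have D: "0 \<le> D" using F_mono[OF that] by (simp add: D_def)
    have "- \<bar>a\<bar> * D \<le> a * D" "b * D \<le> \<bar>b\<bar> * D"
      using D by (intro mult_right_mono; simp)+
    moreover have "0 \<le> \<bar>a\<bar> * D" "0 \<le> \<bar>b\<bar> * D" using D by simp_all
    ultimately have "\<bar>partial_mean b - partial_mean a\<bar> \<le> (\<bar>b\<bar> + \<bar>a\<bar>) * D"
      using partial_mean_diff_bounds[OF that, folded D_def] by (simp add: abs_le_iff algebra_simps)
    then show ?thesis using D by (simp add: D_def)
  qed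
  show ?thesis
  proof (cases "w \<le> t")
    case True
    then show ?thesis using * by blast
  next
    case False
    then show ?thesis using *[of t w] by (simp add: abs_minus_commute add.commute)
  qed
qed

lemma isCont_partial_mean: "isCont partial_mean w"
proof -
  have "((\<lambda>t. (\<bar>t\<bar> + \<bar>w\<bar>) * \<bar>F t - F w\<bar>) \<longlongrightarrow> (\<bar>w\<bar> + \<bar>w\<bar>) * \<bar>F w - F w\<bar>) (at w)"
    using isCont_F[of w] unfolding isCont_def by (intro tendsto_intros) auto
  then have "((\<lambda>t. (\<bar>t\<bar> + \<bar>w\<bar>) * \<bar>F t - F w\<bar>) \<longlongrightarrow> 0) (at w)" by simp
  then have "((\<lambda>t. partial_mean t - partial_mean w) \<longlongrightarrow> 0) (at w)"
    by (rule Lim_null_comparison[rotated]) (auto simp: abs_partial_mean_diff_le)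
  then show ?thesis unfolding isCont_def by (rule LIM_zero_cancel)
qed

lemma partial_mean_tendsto: "(partial_mean \<longlongrightarrow> expectation (\<lambda>s. s)) at_top"
  unfolding partial_mean_def
proof (rule integral_dominated_convergence_at_top[where w="\<lambda>s. \<bar>s\<bar>"])
  show "integrable M (\<lambda>s. \<bar>s\<bar>)" using integrable_value by simp
  show "\<forall>\<^sub>F t in at_top. AE s in M. norm (indicator {..<t} s * s) \<le> \<bar>s\<bar>"
    by (auto simp: indicator_def)
  show "AE s in M. ((\<lambda>t. indicator {..<t} s * s) \<longlongrightarrow> s) at_top"
  proof (rule AE_I2)
    fix s :: real
    have "\<forall>\<^sub>F t in at_top. indicator {..<t} s * s = s"
      using eventually_gt_at_top[of s] by eventually_elim auto
    then show "((\<lambda>t. indicator {..<t} s * s) \<longlongrightarrow> s) at_top" by (rule tendsto_eventually)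
  qed
qed auto

lemma cond_exp_below_eq: "cond_exp_below M w = partial_mean w / F w"
  unfolding cond_exp_below_def set_lebesgue_integral_def partial_mean_def F_def by simp

lemma partial_mean_eq: "partial_mean w = cond_exp_below M w * F w"
  using partial_mean_nonpos_eq_0[of w] F_pos[of w] by (cases "w \<le> 0") (auto simp: cond_exp_below_eq)

lemma cond_exp_below_nonneg: "0 \<le> cond_exp_below M w"
  unfolding cond_exp_below_eq using partial_mean_nonneg F_def by simp

lemma cond_exp_below_nonpos_eq_0: "w \<le> 0 \<Longrightarrow> cond_exp_below M w = 0"
  unfolding cond_exp_below_eq using F_nonpos_eq_0 by simp

lemma cond_exp_below_le: "0 \<le> w \<Longrightarrow> cond_exp_below M w \<le> w"
  using partial_mean_le[of w] F_pos[of w] cond_exp_below_nonpos_eq_0[of w]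
  by (cases "w = 0") (auto simp: cond_exp_below_eq divide_le_eq)

lemma abs_cond_exp_below_le: "\<bar>cond_exp_below M w\<bar> \<le> \<bar>w\<bar>"
  using cond_exp_below_le[of w] cond_exp_below_nonneg[of w] cond_exp_below_nonpos_eq_0[of w]
  by (cases "0 \<le> w") auto

lemma cond_exp_below_less:
  assumes "0 \<le> a" "a < b"
  shows "cond_exp_below M a < cond_exp_below M b"
proof -
  have Fb: "0 < F b" using F_pos assms by simp
  have "cond_exp_below M a * F b
      = partial_mean a + cond_exp_below M a * (F b - F a)"
    by (simp add: partial_mean_eq algebra_simps)
  also have "\<dots> \<le> partial_mean a + a * (F b - F a)"
    using cond_exp_below_le[OF assms(1)] F_mono[of a b] assms by (simp add: mult_right_mono)
  also have "\<dots> < partial_mean b"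
    using partial_mean_diff_gt[OF assms] by simp
  also have "\<dots> = cond_exp_below M b * F b" by (rule partial_mean_eq)
  finally show ?thesis using Fb by simp
qed

lemma cond_exp_below_mono: "a \<le> b \<Longrightarrow> cond_exp_below M a \<le> cond_exp_below M b"
  using cond_exp_below_less[of a b] cond_exp_below_nonpos_eq_0[of a] cond_exp_below_nonneg[of b]
  by (cases "a \<le> 0"; cases "a = b") auto

lemma isCont_cond_exp_below:
  assumes "0 \<le> w"
  shows "isCont (cond_exp_below M) w"
proof (cases "w = 0")
  case True
  have "((\<lambda>t. \<bar>t\<bar>) \<longlongrightarrow> 0) (at (0::real))"
    using tendsto_rabs[OF tendsto_ident_at[of 0 UNIV]] by simp
  then have "((\<lambda>t. cond_exp_below M t) \<longlongrightarrow> 0) (at 0)"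
    by (rule Lim_null_comparison[rotated]) (simp add: abs_cond_exp_below_le)
  then show ?thesis using True cond_exp_below_nonpos_eq_0[of 0] by (simp add: isCont_def)
next
  case False
  then have "F w \<noteq> 0" using F_pos assms by (metis less_irrefl order_le_less)
  then have "isCont (\<lambda>w. partial_mean w / F w) w"
    using isCont_partial_mean isCont_F by (intro continuous_intros) auto
  then show ?thesis unfolding cond_exp_below_eq[abs_def] by simp
qed

lemma cond_exp_below_tendsto: "(cond_exp_below M \<longlongrightarrow> expectation (\<lambda>s. s)) at_top"
proof -
  have "((\<lambda>w. partial_mean w / F w) \<longlongrightarrow> expectation (\<lambda>s. s) / 1) at_top"
    by (intro tendsto_divide partial_mean_tendsto F_tendsto_1) simp
  then show ?thesis by (simp add: cond_exp_below_eq[abs_def])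
qed

definition surplus :: "real set \<Rightarrow> real \<Rightarrow> real" where
  "surplus S v = (\<integral>s. indicator S s * (v - s) \<partial>M)"

lemma integrable_surplus: "S \<in> sets borel \<Longrightarrow> integrable M (\<lambda>s. indicator S s * (v - s))"
  using Bochner_Integration.integrable_diff[OF integrable_indicator_mult_const integrable_indicator_mult_id]
  by (simp add: right_diff_distrib)

lemma surplus_eq:
  assumes "S \<in> sets borel"
  shows "surplus S v = v * measure M S - (\<integral>s. indicator S s * s \<partial>M)"
proof -
  have "surplus S v = (\<integral>s. indicator S s * v - indicator S s * s \<partial>M)"
    unfolding surplus_def by (simp add: right_diff_distrib)
  also have "\<dots> = v * measure M S - (\<integral>s. indicator S s * s \<partial>M)"
    using assms
    by (simp add: Bochner_Integration.integral_diff[OF integrable_indicator_mult_const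
          integrable_indicator_mult_id] integral_indicator_mult_const)
  finally show ?thesis .
qed

lemma surplus_lessThan: "surplus {..<w} v = v * F w - partial_mean w"
  by (simp add: surplus_eq F_def partial_mean_def)

lemma surplus_UNIV: "surplus UNIV v = v - expectation (\<lambda>s. s)"
  using surplus_eq[of UNIV v] prob_space by simp

lemma surplus_le_surplus_lessThan_max:
  assumes "S \<in> sets borel" "{..<a} \<subseteq> S"
  shows "surplus S v \<le> surplus {..<max v a} v"
  unfolding surplus_def using assms
  by (intro integral_mono integrable_surplus)
    (auto simp: indicator_def subset_iff less_max_iff_disj not_less)

end

section \<open>The bidding function and the period-2 best response\<close>

locale limit_price = value_distribution +
  fixes L vlow :: real
  assumes L_nonneg: "0 \<le> L" and vlow_nonneg: "0 \<le> vlow"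
    and L_eq: "L = cond_exp_below M vlow"
begin

abbreviation \<beta> :: "real \<Rightarrow> real" where "\<beta> \<equiv> beta_L M L vlow"

lemma beta_L_vlow: "\<beta> vlow = L"
  unfolding beta_L_def using L_eq by simp

lemma beta_L_less_vlow: "v < vlow \<Longrightarrow> \<beta> v \<le> L"
  unfolding beta_L_def using L_nonneg by auto

lemma beta_L_ge: "vlow \<le> v \<Longrightarrow> L \<le> \<beta> v"
  unfolding beta_L_def using cond_exp_below_mono[of vlow v] L_eq by auto

lemma beta_L_nonneg: "0 \<le> \<beta> v"
  unfolding beta_L_def using L_nonneg cond_exp_below_nonneg by auto

lemma beta_L_le_abs: "\<beta> v \<le> \<bar>v\<bar>"
  unfolding beta_L_def using abs_cond_exp_below_le[of v] by auto

lemma beta_L_less: "vlow \<le> a \<Longrightarrow> a < b \<Longrightarrow> \<beta> a < \<beta> b"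
  unfolding beta_L_def using cond_exp_below_less[of a b] vlow_nonneg by auto

lemma mono_beta_L: "mono \<beta>"
proof
  fix a b :: real assume "a \<le> b"
  then show "\<beta> a \<le> \<beta> b"
    using cond_exp_below_mono[of a b] beta_L_less_vlow[of a] beta_L_ge[of b] L_nonneg
    unfolding beta_L_def by (auto split: if_splits)
qed

lemma borel_measurable_beta_L[measurable]: "\<beta> \<in> borel_measurable borel"
  using borel_measurable_mono[OF mono_beta_L] .

lemma beta_L_attains:
  assumes "L \<le> x" "x \<le> \<beta> t"
  obtains w where "vlow \<le> w" "\<beta> w = x"
proof (cases "x = L")
  case True
  then show ?thesis using that[of vlow] beta_L_vlow by simp
next
  case False
  then have "\<beta> vlow < \<beta> t" using assms beta_L_vlow by simp
  then have "vlow \<le> t" using monoD[OF mono_beta_L, of t vlow] by (cases "t \<le> vlow") auto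
  moreover have "continuous_on {vlow..t} \<beta>"
  proof (rule continuous_on_cong[THEN iffD1])
    show "continuous_on {vlow..t} (cond_exp_below M)"
      using vlow_nonneg by (intro continuous_at_imp_continuous_on ballI isCont_cond_exp_below) auto
  qed (auto simp: beta_L_def)
  ultimately obtain w where "vlow \<le> w" "w \<le> t" "\<beta> w = x"
    using IVT'[of \<beta> vlow x t] assms beta_L_vlow by auto
  then show ?thesis using that by blast
qed

lemma beta_L_le_iff: "vlow \<le> w \<Longrightarrow> \<beta> s \<le> \<beta> w \<longleftrightarrow> s \<le> w"
  using beta_L_less[of w s] monoD[OF mono_beta_L, of s w] by (cases "s \<le> w") auto

lemma beta_L_less_iff: "vlow \<le> w \<Longrightarrow> L < \<beta> w \<Longrightarrow> \<beta> s < \<beta> w \<longleftrightarrow> s < w"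
  using beta_L_less[of s w] beta_L_less_vlow[of s] monoD[OF mono_beta_L, of w s]
  by (cases "s < w"; cases "vlow \<le> s") auto

lemma partial_mean_eq_beta_L: "vlow \<le> w \<Longrightarrow> partial_mean w = \<beta> w * F w"
  using partial_mean_eq unfolding beta_L_def by simp

lemma expectation_le_if_beta_L_less:
  assumes "\<And>t. \<beta> t < c"
  shows "expectation (\<lambda>s. s) \<le> c"
proof (rule tendsto_upperbound[OF cond_exp_below_tendsto])
  have "cond_exp_below M t \<le> c" if "vlow \<le> t" for t
    using assms[of t] that by (simp add: beta_L_def)
  then show "\<forall>\<^sub>F t in at_top. cond_exp_below M t \<le> c"
    by (rule eventually_mono[OF eventually_ge_at_top[of vlow]])
qed simp

definition expected_p2_payoff :: "real \<Rightarrow> real \<Rightarrow> real" where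
  "expected_p2_payoff x v = (if L \<le> x then (v - x) * measure M {s. \<beta> s \<le> x} else 0)"

lemma expected_p2_payoff_beta_L_nonneg: "0 \<le> v \<Longrightarrow> 0 \<le> expected_p2_payoff (\<beta> v) v"
  using beta_L_le_abs[of v] by (simp add: expected_p2_payoff_def)

lemma expected_p2_payoff_le_surplus:
  assumes "L \<le> x"
  obtains S where "S \<in> sets borel" "{..<vlow} \<subseteq> S" "expected_p2_payoff x v \<le> surplus S v"
proof (cases "\<exists>t. x \<le> \<beta> t")
  case True
  then obtain w where w: "vlow \<le> w" "\<beta> w = x" using beta_L_attains assms by blast
  have "{s. \<beta> s \<le> x} = {..w}" using beta_L_le_iff[OF w(1)] w(2) by auto
  then have "expected_p2_payoff x v = surplus {..<w} v"
    using assms w partial_mean_eq_beta_L[OF w(1)]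
    by (simp add: expected_p2_payoff_def surplus_lessThan F_eq_atMost algebra_simps)
  then show ?thesis using that[of "{..<w}"] w by auto
next
  case False
  then have less: "\<And>t. \<beta> t < x" by (simp add: not_le)
  then have "{s. \<beta> s \<le> x} = UNIV" by (auto intro: less_imp_le)
  then have "expected_p2_payoff x v = v - x"
    using assms prob_space by (simp add: expected_p2_payoff_def)
  also have "\<dots> \<le> surplus UNIV v"
    using expectation_le_if_beta_L_less[OF less] by (simp add: surplus_UNIV)
  finally show ?thesis using that[of UNIV] by simp
qed

lemma surplus_le_expected_p2_payoff_beta_L:
  assumes "0 \<le> v"
  shows "surplus {..<max v vlow} v \<le> expected_p2_payoff (\<beta> v) v"
proof (cases "vlow \<le> v")
  case True
  have "{s. \<beta> s \<le> \<beta> v} = {..v}" using beta_L_le_iff[OF True] by auto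
  then have "expected_p2_payoff (\<beta> v) v = surplus {..<v} v"
    using beta_L_ge[OF True] partial_mean_eq_beta_L[OF True]
    by (simp add: expected_p2_payoff_def surplus_lessThan F_eq_atMost algebra_simps)
  then show ?thesis using True by simp
next
  case below: False
  have surplus_vlow: "surplus {..<vlow} v = (v - L) * F vlow"
    using partial_mean_eq_beta_L[of vlow] beta_L_vlow by (simp add: surplus_lessThan algebra_simps)
  show ?thesis
  proof (cases "L < v")
    case True
    then have "\<beta> v = L" using below by (simp add: beta_L_def)
    moreover have "{s. \<beta> s \<le> L} = {..vlow}" using beta_L_le_iff[of vlow] beta_L_vlow by auto
    ultimately have "expected_p2_payoff (\<beta> v) v = surplus {..<vlow} v"
      using surplus_vlow by (simp add: expected_p2_payoff_def F_eq_atMost)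
    then show ?thesis using below by simp
  next
    case False
    then have "surplus {..<max v vlow} v \<le> 0"
      using below surplus_vlow by (simp add: F_def mult_nonpos_nonneg)
    then show ?thesis using expected_p2_payoff_beta_L_nonneg[OF assms] by linarith
  qed
qed

theorem period2_best_response:
  assumes "0 \<le> v"
  shows "expected_p2_payoff x v \<le> expected_p2_payoff (\<beta> v) v"
proof (cases "L \<le> x")
  case True
  then obtain S where S: "S \<in> sets borel" "{..<vlow} \<subseteq> S" "expected_p2_payoff x v \<le> surplus S v"
    by (rule expected_p2_payoff_le_surplus)
  note S(3)
  also have "surplus S v \<le> surplus {..<max v vlow} v"
    using S(1,2) by (rule surplus_le_surplus_lessThan_max)
  also have "\<dots> \<le> expected_p2_payoff (\<beta> v) v"
    using assms by (rule surplus_le_expected_p2_payoff_beta_L)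
  finally show ?thesis .
next
  case False
  then show ?thesis
    using expected_p2_payoff_beta_L_nonneg[OF assms] by (simp add: expected_p2_payoff_def)
qed

end

section \<open>Period-1 deviations\<close>

lemma prob_space_PiM_bid_strategy: "\<forall>j\<in>I. bid_strategy (\<rho> j) \<Longrightarrow> prob_space (PiM I \<rho>)"
  by (intro prob_space_PiM) (auto simp: bid_strategy_def)

context limit_price
begin

lemma surplus_beta_L_less_eq_0:
  assumes "L < c" "c \<le> \<beta> t"
  shows "surplus {s. \<beta> s < c} c = 0"
proof -
  obtain w where w: "vlow \<le> w" "\<beta> w = c" using beta_L_attains assms less_imp_le by blast
  have "{s. \<beta> s < c} = {..<w}" using beta_L_less_iff[OF w(1)] w(2) assms(1) by auto
  then show ?thesis using w partial_mean_eq_beta_L[OF w(1)] by (simp add: surplus_lessThan)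
qed

lemma surplus_beta_L_less_nonneg:
  assumes "L < c"
  shows "0 \<le> surplus {s. \<beta> s < c} c"
proof (cases "\<exists>t. c \<le> \<beta> t")
  case True
  then show ?thesis using surplus_beta_L_less_eq_0 assms by auto
next
  case False
  then have less: "\<And>t. \<beta> t < c" by (simp add: not_le)
  then have "{s. \<beta> s < c} = UNIV" by auto
  then show ?thesis using expectation_le_if_beta_L_less[OF less] by (simp add: surplus_UNIV)
qed

lemma integral_M_p1_payoff:
  "(\<integral>v. p1_payoff I L \<beta> i b v \<partial>M) =
    (if L < b i \<and> (\<forall>j\<in>I. b j \<le> b i)
     then - surplus {s. \<beta> s < b i} (b i) / real (card {j\<in>I. b j = b i}) else 0)"
proof (cases "L < b i \<and> (\<forall>j\<in>I. b j \<le> b i)")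
  case True
  let ?S = "{s. \<beta> s < b i}"
  have "(\<lambda>v. p1_payoff I L \<beta> i b v)
      = (\<lambda>v. indicator ?S v * (v - b i) / real (card {j\<in>I. b j = b i}))"
    using True by (auto simp: p1_payoff_def fun_eq_iff indicator_def)
  moreover have "(\<integral>v. indicator ?S v * (v - b i) \<partial>M) = - surplus ?S (b i)"
    unfolding surplus_def by (subst integral_minus[symmetric]) (simp add: algebra_simps)
  ultimately show ?thesis using True by simp
next
  case False
  then have "(\<lambda>v. p1_payoff I L \<beta> i b v) = (\<lambda>v. 0)" by (auto simp: p1_payoff_def fun_eq_iff)
  then show ?thesis using False by (simp only: if_not_P) simp
qed

lemma integral_M_p1_payoff_nonpos: "(\<integral>v. p1_payoff I L \<beta> i b v \<partial>M) \<le> 0"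
  unfolding integral_M_p1_payoff
  using surplus_beta_L_less_nonneg by (auto intro: divide_nonpos_nonneg)

lemma integral_M_p1_payoff_eq_0:
  "b i \<le> \<beta> t \<Longrightarrow> (\<integral>v. p1_payoff I L \<beta> i b v \<partial>M) = 0"
  unfolding integral_M_p1_payoff using surplus_beta_L_less_eq_0 by auto

lemma integral_p1_payoff_nonpos:
  assumes "\<forall>j\<in>I. bid_strategy (\<rho> j)"
    and "integrable (PiM I \<rho> \<Otimes>\<^sub>M M) (\<lambda>(b, v). p1_payoff I L \<beta> i b v)"
  shows "integral\<^sup>L (PiM I \<rho> \<Otimes>\<^sub>M M) (\<lambda>(b, v). p1_payoff I L \<beta> i b v) \<le> 0"
proof -
  interpret Pi: prob_space "PiM I \<rho>" using assms(1) by (rule prob_space_PiM_bid_strategy)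
  interpret pair_sigma_finite "PiM I \<rho>" M by intro_locales
  have "integral\<^sup>L (PiM I \<rho> \<Otimes>\<^sub>M M) (\<lambda>(b, v). p1_payoff I L \<beta> i b v)
      = (\<integral>b. (\<integral>v. p1_payoff I L \<beta> i b v \<partial>M) \<partial>PiM I \<rho>)"
    using integral_fst'[OF assms(2)] by simp
  also have "\<dots> \<le> 0"
  proof -
    have "0 \<le> (\<integral>b. - (\<integral>v. p1_payoff I L \<beta> i b v \<partial>M) \<partial>PiM I \<rho>)"
      by (intro integral_nonneg_AE AE_I2) (simp add: integral_M_p1_payoff_nonpos)
    then show ?thesis by simp
  qed
  finally show ?thesis .
qed

end

section \<open>Equilibrium\<close>

locale auction = limit_price +
  fixes I :: "nat set" and \<sigma> :: "nat \<Rightarrow> real measure"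
  assumes finite_I: "finite I" and I_nonempty: "I \<noteq> {}"
    and bid_strategy_\<sigma>: "\<forall>i\<in>I. bid_strategy (\<sigma> i)"
    and distr_max_bid: "distr (PiM I \<sigma>) borel (\<lambda>b. Max (b ` I)) = distr M borel \<beta>"
begin

sublocale bids: prob_space "PiM I \<sigma>"
  using bid_strategy_\<sigma> by (rule prob_space_PiM_bid_strategy)

sublocale bids_values: pair_sigma_finite "PiM I \<sigma>" M
  by intro_locales

lemma borel_measurable_bid[measurable]:
  assumes "j \<in> I"
  shows "(\<lambda>b. b j) \<in> borel_measurable (PiM I \<sigma>)"
proof -
  have "sets (\<sigma> j) = sets borel" using bid_strategy_\<sigma> assms by (simp add: bid_strategy_def)
  then show ?thesis
    using measurable_component_singleton[OF assms, of \<sigma>] measurable_cong_sets by blast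
qed

lemma borel_measurable_max_bid[measurable]:
  "(\<lambda>b. Max (b ` I)) \<in> borel_measurable (PiM I \<sigma>)"
proof -
  have "(\<lambda>b. Max ((\<lambda>j. b j) ` I)) \<in> borel_measurable (PiM I \<sigma>)"
    by (rule borel_measurable_Max[OF finite_I borel_measurable_bid])
  then show ?thesis by simp
qed

lemma integral_p2_payoff: "(\<integral>b. p2_payoff I L x b v \<partial>PiM I \<sigma>) = expected_p2_payoff x v"
proof -
  have "(\<lambda>b. p2_payoff I L x b v)
      = (\<lambda>b. (if L \<le> x then v - x else 0) * indicator {b. Max (b ` I) \<le> x} b)"
    using finite_I I_nonempty by (auto simp: p2_payoff_def fun_eq_iff indicator_def)
  moreover have "measure (PiM I \<sigma>) ({b. Max (b ` I) \<le> x} \<inter> space (PiM I \<sigma>))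
      = measure M {s. \<beta> s \<le> x}"
  proof -
    have "measure (PiM I \<sigma>) ({b. Max (b ` I) \<le> x} \<inter> space (PiM I \<sigma>))
        = measure (distr (PiM I \<sigma>) borel (\<lambda>b. Max (b ` I))) {..x}"
      by (subst measure_distr) (auto intro!: arg_cong[where f="measure _"])
    also have "\<dots> = measure (distr M borel \<beta>) {..x}" by (simp only: distr_max_bid)
    also have "\<dots> = measure M {s. \<beta> s \<le> x}"
      by (subst measure_distr) (auto intro!: arg_cong[where f="measure _"])
    finally show ?thesis .
  qed
  ultimately show ?thesis by (simp add: expected_p2_payoff_def)
qed

lemma AE_max_bid_le_beta_L: "AE b in PiM I \<sigma>. \<exists>n::nat. Max (b ` I) \<le> \<beta> n"
proof -
  have "{y. \<exists>n::nat. y \<le> \<beta> n} = (\<Union>n::nat. {..\<beta> n})" by auto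
  then have borel: "{y \<in> space borel. \<exists>n::nat. y \<le> \<beta> n} \<in> sets borel" by auto
  have "AE s in M. \<exists>n::nat. \<beta> s \<le> \<beta> n"
    using monoD[OF mono_beta_L real_nat_ceiling_ge] by blast
  then have "AE y in distr M borel \<beta>. \<exists>n::nat. y \<le> \<beta> n"
    by (simp add: AE_distr_iff[OF _ borel])
  then show ?thesis
    unfolding distr_max_bid[symmetric] by (simp add: AE_distr_iff[OF _ borel])
qed

lemma integrable_max_bid: "integrable (PiM I \<sigma>) (\<lambda>b. Max (b ` I))"
proof -
  have "integrable M \<beta>"
    using beta_L_nonneg beta_L_le_abs
    by (intro Bochner_Integration.integrable_bound[OF integrable_value] AE_I2) auto
  then have "integrable (distr M borel \<beta>) (\<lambda>y. y)"
    by (simp add: integrable_distr_eq)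
  then have "integrable (distr (PiM I \<sigma>) borel (\<lambda>b. Max (b ` I))) (\<lambda>y. y)"
    by (simp only: distr_max_bid)
  then show ?thesis by (simp add: integrable_distr_eq)
qed

lemma borel_measurable_p1_payoff:
  assumes "i \<in> I"
  shows "(\<lambda>(b, v). p1_payoff I L \<beta> i b v) \<in> borel_measurable (PiM I \<sigma> \<Otimes>\<^sub>M M)"
proof -
  have "real (card {j\<in>I. b j = b i}) = (\<Sum>j\<in>I. if b j = b i then 1 else 0)" for b :: "nat \<Rightarrow> real"
    using sum.inter_filter[OF finite_I, of "\<lambda>_. 1::real"] by simp
  then have "(\<lambda>(b, v). p1_payoff I L \<beta> i b v) = (\<lambda>(b, v).
      if L < b i \<and> \<beta> v < b i \<and> (\<forall>j\<in>I. b j \<le> b i)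
      then (v - b i) / (\<Sum>j\<in>I. if b j = b i then 1 else 0) else 0)"
    by (simp add: p1_payoff_def fun_eq_iff)
  then show ?thesis using assms finite_I by simp measurable
qed

lemma abs_p1_payoff_le:
  assumes "i \<in> I"
  shows "\<bar>p1_payoff I L \<beta> i b v\<bar> \<le> \<bar>v\<bar> + \<bar>Max (b ` I)\<bar>"
proof (cases "L < b i \<and> \<beta> v < b i \<and> (\<forall>j\<in>I. b j \<le> b i)")
  case True
  let ?k = "real (card {j\<in>I. b j = b i})"
  have "1 \<le> ?k" using assms finite_I by (auto simp: Suc_le_eq card_gt_0_iff)
  then have "\<bar>(v - b i) / ?k\<bar> \<le> \<bar>v - b i\<bar>"
    by (simp add: abs_divide divide_le_eq mult_le_cancel_left1)
  also have "\<dots> \<le> \<bar>v\<bar> + \<bar>Max (b ` I)\<bar>"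
    using True L_nonneg Max_ge[OF finite_imageI[OF finite_I] imageI[OF assms], of b] by linarith
  finally show ?thesis using True by (simp add: p1_payoff_def)
next
  case False
  then have "p1_payoff I L \<beta> i b v = 0" unfolding p1_payoff_def by (rule if_not_P)
  then show ?thesis by simp
qed

lemma integrable_p1_payoff:
  assumes "i \<in> I"
  shows "integrable (PiM I \<sigma> \<Otimes>\<^sub>M M) (\<lambda>(b, v). p1_payoff I L \<beta> i b v)"
proof (rule Bochner_Integration.integrable_bound)
  have "integrable (PiM I \<sigma> \<Otimes>\<^sub>M M) (\<lambda>p. Max (fst p ` I))"
    using integrable_distr_eq[of fst "PiM I \<sigma> \<Otimes>\<^sub>M M" "PiM I \<sigma>" "\<lambda>b. Max (b ` I)"]
      integrable_max_bid
    by (simp add: distr_pair_fst)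
  moreover have "integrable (PiM I \<sigma> \<Otimes>\<^sub>M M) (\<lambda>p. snd p)"
    by (rule bids_values.Fubini_integrable) (use integrable_value in auto)
  ultimately show "integrable (PiM I \<sigma> \<Otimes>\<^sub>M M) (\<lambda>p. \<bar>snd p\<bar> + \<bar>Max (fst p ` I)\<bar>)"
    by (intro Bochner_Integration.integrable_add integrable_abs)
  show "AE p in PiM I \<sigma> \<Otimes>\<^sub>M M.
      norm ((\<lambda>(b, v). p1_payoff I L \<beta> i b v) p) \<le> norm (\<bar>snd p\<bar> + \<bar>Max (fst p ` I)\<bar>)"
    using abs_p1_payoff_le[OF assms] by (intro AE_I2) (auto simp: split_beta)
qed (rule borel_measurable_p1_payoff[OF assms])

lemma integral_p1_payoff_eq_0:
  assumes "i \<in> I"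
  shows "integral\<^sup>L (PiM I \<sigma> \<Otimes>\<^sub>M M) (\<lambda>(b, v). p1_payoff I L \<beta> i b v) = 0"
proof -
  have "integral\<^sup>L (PiM I \<sigma> \<Otimes>\<^sub>M M) (\<lambda>(b, v). p1_payoff I L \<beta> i b v)
      = (\<integral>b. (\<integral>v. p1_payoff I L \<beta> i b v \<partial>M) \<partial>PiM I \<sigma>)"
    using bids_values.integral_fst'[OF integrable_p1_payoff[OF assms]] by simp
  also have "\<dots> = 0"
  proof (rule integral_eq_zero_AE)
    show "AE b in PiM I \<sigma>. (\<integral>v. p1_payoff I L \<beta> i b v \<partial>M) = 0"
      using AE_max_bid_le_beta_L
    proof eventually_elim
      case (elim b)
      then obtain n :: nat where "Max (b ` I) \<le> \<beta> n" by blast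
      moreover have "b i \<le> Max (b ` I)" using assms finite_I by simp
      ultimately have "b i \<le> \<beta> n" by linarith
      then show ?case by (rule integral_M_p1_payoff_eq_0)
    qed
  qed
  finally show ?thesis .
qed

theorem is_equilibrium_beta_L:
  assumes "I = {0..<n - 1}"
  shows "is_equilibrium M L n \<sigma> \<beta>"
  unfolding is_equilibrium_def Let_def assms[symmetric]
proof (intro conjI ballI allI impI)
  show "\<And>i. i \<in> I \<Longrightarrow> bid_strategy (\<sigma> i)" using bid_strategy_\<sigma> by blast
  show "\<beta> \<in> borel_measurable borel" "\<And>v. 0 \<le> \<beta> v" by (simp_all add: beta_L_nonneg)
  show "(\<integral>b. p2_payoff I L x b v \<partial>PiM I \<sigma>) \<le> (\<integral>b. p2_payoff I L (\<beta> v) b v \<partial>PiM I \<sigma>)"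
    if "v \<in> measure_support M" for v x
    using that period2_best_response measure_support_M by (simp add: integral_p2_payoff)
  show "integrable (PiM I \<sigma> \<Otimes>\<^sub>M M) (\<lambda>(b, v). p1_payoff I L \<beta> i b v)" if "i \<in> I" for i
    using that by (rule integrable_p1_payoff)
  show "integral\<^sup>L (PiM I (\<sigma>(i := \<tau>)) \<Otimes>\<^sub>M M) (\<lambda>(b, v). p1_payoff I L \<beta> i b v)
      \<le> integral\<^sup>L (PiM I \<sigma> \<Otimes>\<^sub>M M) (\<lambda>(b, v). p1_payoff I L \<beta> i b v)"
    if "i \<in> I" "bid_strategy \<tau>"
      "integrable (PiM I (\<sigma>(i := \<tau>)) \<Otimes>\<^sub>M M) (\<lambda>(b, v). p1_payoff I L \<beta> i b v)"
    for i \<tau>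
    using integral_p1_payoff_nonpos[OF _ that(3)] integral_p1_payoff_eq_0[OF that(1)]
      bid_strategy_\<sigma> that(2) by simp
qed

end

lemma emeasure_vdist_singleton:
  assumes "f \<in> borel_measurable borel"
  shows "emeasure (vdist f) {x} = 0"
proof -
  have "emeasure (vdist f) {x} = (\<integral>\<^sup>+ y. ennreal (f y) * indicator {x} y \<partial>lborel)"
    unfolding vdist_def using assms by (intro emeasure_density) auto
  also have "\<dots> = 0"
    using AE_lborel_singleton[of x] assms by (subst nn_integral_0_iff_AE) (auto elim: AE_mp)
  finally show ?thesis .
qed

theorem corollary1:
  fixes f :: "real \<Rightarrow> real" and L vlow :: real and n :: nat
    and \<sigma> :: "nat \<Rightarrow> real measure"
  assumes "f \<in> borel_measurable borel"
    and "\<forall>x. 0 \<le> f x"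
    and "prob_space (vdist f)"
    and "measure_support (vdist f) = {0..}"
    and "integrable (vdist f) (\<lambda>x. x)"
    and "0 \<le> L"
    and "L < (\<integral>x. x \<partial>vdist f)"
    and "vlow \<in> measure_support (vdist f)"
    and "L = cond_exp_below (vdist f) vlow"
    and "2 \<le> n"
    and "\<forall>i\<in>{0..<n-1}. bid_strategy (\<sigma> i)"
    and "distr (PiM {0..<n-1} \<sigma>) borel (\<lambda>b. Max (b ` {0..<n-1}))
           = distr (vdist f) borel (beta_L (vdist f) L vlow)"
  shows "is_equilibrium (vdist f) L n \<sigma> (beta_L (vdist f) L vlow)"
proof -
  have "real_distribution (vdist f)"
    using assms(3) by (simp add: real_distribution_def real_distribution_axioms_def vdist_def)
  then interpret real_distribution "vdist f" .
  have "measure (vdist f) {x} = 0" for x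
    using emeasure_vdist_singleton[OF assms(1)] by (simp add: measure_def)
  then interpret auction "vdist f" L vlow "{0..<n-1}" \<sigma>
    using assms(4-6,8-12) by unfold_locales auto
  show ?thesis by (rule is_equilibrium_beta_L) simp
qed

end
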